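(* Let $P$ be a finite poset and $t\geq 2$ a fixed integer. Then either $\mathrm{sat}^{\star}([t]^n,P)=O(1)$ as $n\to\infty$, or $\mathrm{sat}^{\star}([t]^n,P)\geq\log_t(n)$ for all $n$.
   Context: For positive integers $n,t$, $[n]=\{1,\dots,n\}$ and the hypergrid $[t]^n$ is the set of functions $f:[n]\to[t]$, partially ordered by $f\leq g$ iff $f(i)\leq g(i)$ for all $i\in[n]$. An induced copy of a poset $P$ in a family $\mathcal{F}\subseteq[t]^n$ is an injective map $\phi:P\to\mathcal{F}$ such that $\phi(x)\leq\phi(y)$ iff $x\leq_P y$. A family $\mathcal{F}\subseteq[t]^n$ is induced $P$-free if it contains no induced copy of $P$; it is induced $P$-saturated if it is induced $P$-free and for every $f\in[t]^n\setminus\mathcal{F}$ the family $\mathcal{F}\cup\{f\}$ contains an induced copy of $P$. Whenever $P$ embeds as an induced subposet of $[t]^n$, $\mathrm{sat}^{\star}([t]^n,P)$ denotes the minimum size of an induced $P$-saturated family in $[t]^n$. *)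

theory Defs
  imports Complex_Main
begin

text \<open>The hypergrid [t]^n: functions [n] -> [t], represented extensionally as
  functions nat => nat that are 0 outside [n] = {1..n}.\<close>
definition hypergrid :: "nat \<Rightarrow> nat \<Rightarrow> (nat \<Rightarrow> nat) set" where
  "hypergrid t n = {f. (\<forall>i\<in>{1..n}. f i \<in> {1..t}) \<and> (\<forall>i. i \<notin> {1..n} \<longrightarrow> f i = 0)}"

definition grid_le :: "nat \<Rightarrow> (nat \<Rightarrow> nat) \<Rightarrow> (nat \<Rightarrow> nat) \<Rightarrow> bool" where
  "grid_le n f g \<longleftrightarrow> (\<forall>i\<in>{1..n}. f i \<le> g i)"

definition induced_copy :: "nat \<Rightarrow> ('p::order \<Rightarrow> (nat \<Rightarrow> nat)) \<Rightarrow> (nat \<Rightarrow> nat) set \<Rightarrow> bool" where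
  "induced_copy n \<phi> F \<longleftrightarrow> inj \<phi> \<and> (\<forall>x. \<phi> x \<in> F) \<and>
     (\<forall>x y. grid_le n (\<phi> x) (\<phi> y) \<longleftrightarrow> x \<le> y)"

definition contains_induced :: "'p::order itself \<Rightarrow> nat \<Rightarrow> (nat \<Rightarrow> nat) set \<Rightarrow> bool" where
  "contains_induced _ n F \<longleftrightarrow> (\<exists>\<phi>::'p \<Rightarrow> (nat \<Rightarrow> nat). induced_copy n \<phi> F)"

definition induced_free :: "'p::order itself \<Rightarrow> nat \<Rightarrow> (nat \<Rightarrow> nat) set \<Rightarrow> bool" where
  "induced_free P n F \<longleftrightarrow> \<not> contains_induced P n F"

definition induced_saturated :: "'p::order itself \<Rightarrow> nat \<Rightarrow> nat \<Rightarrow> (nat \<Rightarrow> nat) set \<Rightarrow> bool" where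
  "induced_saturated P t n F \<longleftrightarrow> F \<subseteq> hypergrid t n \<and> induced_free P n F \<and>
     (\<forall>f \<in> hypergrid t n - F. contains_induced P n (insert f F))"

definition embeds_in_grid :: "'p::order itself \<Rightarrow> nat \<Rightarrow> nat \<Rightarrow> bool" where
  "embeds_in_grid P t n \<longleftrightarrow> contains_induced P n (hypergrid t n)"

text \<open>sat*([t]^n, P): minimum size of an induced P-saturated family
  (meaningful when P embeds in [t]^n).\<close>
definition sat_star :: "'p::order itself \<Rightarrow> nat \<Rightarrow> nat \<Rightarrow> nat" where
  "sat_star P t n = Inf {card F | F. induced_saturated P t n F}"

end

theory Submission
  imports Defs "HOL-Library.FuncSet"
begin

text \<open>If some saturated family F in [t]^n has fewer than log_t n members, then by pigeonhole
  two coordinates i and j are twins: every member of F takes the same value on them. Adding a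
  coordinate n+1 that copies coordinate i then turns F into an induced P-saturated family of the
  same size in [t]^(n+1) in which i and j are still twins, so sat*([t]^n, P) stays bounded by |F|
  from n on.\<close>

lemma finite_hypergrid: "finite (hypergrid t n)"
proof -
  have "hypergrid t n =
      {f. \<forall>x. (x \<in> {1..n} \<longrightarrow> f x \<in> {1..t}) \<and> (x \<notin> {1..n} \<longrightarrow> f x = 0)}"
    unfolding hypergrid_def by blast
  then show ?thesis using finite_set_of_finite_funs[of "{1..n}" "{1..t}" 0] by simp
qed

lemma hypergrid_Suc_zero: "f \<in> hypergrid t n \<Longrightarrow> f (Suc n) = 0"
  unfolding hypergrid_def by auto

lemma grid_le_Suc: "grid_le (Suc n) f g \<longleftrightarrow> grid_le n f g \<and> f (Suc n) \<le> g (Suc n)"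
  unfolding grid_le_def by (auto simp: le_Suc_eq)

lemma grid_le_upd_Suc: "grid_le n (f(Suc n := a)) (g(Suc n := b)) = grid_le n f g"
  unfolding grid_le_def by auto

lemma contains_induced_image:
  assumes "contains_induced (P :: 'p::order itself) n A" and "inj_on e A"
    and "\<And>f g. f \<in> A \<Longrightarrow> g \<in> A \<Longrightarrow> grid_le m (e f) (e g) = grid_le n f g"
  shows "contains_induced P m (e ` A)"
proof -
  obtain \<phi> :: "'p \<Rightarrow> nat \<Rightarrow> nat" where \<phi>: "induced_copy n \<phi> A"
    using assms(1) unfolding contains_induced_def by blast
  then have "range \<phi> \<subseteq> A" "inj \<phi>" unfolding induced_copy_def by auto
  then have "inj (e \<circ> \<phi>)"
    using comp_inj_on inj_on_subset[OF assms(2)] by blast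
  then have "induced_copy m (e \<circ> \<phi>) (e ` A)"
    using \<phi> \<open>range \<phi> \<subseteq> A\<close> assms(3) unfolding induced_copy_def by auto
  then show ?thesis unfolding contains_induced_def by blast
qed

lemma induced_saturated_exists: "\<exists>F. induced_saturated (P :: 'p::order itself) t n F"
proof -
  let ?A = "{F. F \<subseteq> hypergrid t n \<and> induced_free P n F}"
  have "finite ?A" using finite_hypergrid by (simp add: finite_Pow_iff)
  moreover have "{} \<in> ?A"
    by (simp add: induced_free_def contains_induced_def induced_copy_def)
  ultimately obtain F where F: "F \<in> ?A" and maximal: "\<forall>G\<in>?A. F \<subseteq> G \<longrightarrow> F = G"
    using finite_has_maximal[of ?A] by blast
  have "contains_induced P n (insert f F)" if f: "f \<in> hypergrid t n - F" for f
  proof (rule ccontr)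
    assume "\<not> contains_induced P n (insert f F)"
    then have "insert f F \<in> ?A" using F f by (auto simp: induced_free_def)
    then show False using maximal f by blast
  qed
  with F show ?thesis unfolding induced_saturated_def by blast
qed

lemma sat_star_le_card: "induced_saturated P t n F \<Longrightarrow> sat_star P t n \<le> card F"
  unfolding sat_star_def by (rule cInf_lower) auto

lemma sat_star_attained:
  obtains F where "induced_saturated (P :: 'p::order itself) t n F" "card F = sat_star P t n"
proof -
  have "{card F | F. induced_saturated P t n F} \<noteq> {}"
    using induced_saturated_exists by blast
  then have "sat_star P t n \<in> {card F | F. induced_saturated P t n F}"
    unfolding sat_star_def by (rule Inf_nat_def1)
  then show ?thesis using that by auto
qed

lemma twin_coordinates_exist:
  assumes "F \<subseteq> hypergrid t n" and "t ^ card F < n"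
  obtains i j where "i \<in> {1..n}" "j \<in> {1..n}" "i \<noteq> j" "\<forall>f\<in>F. f i = f j"
proof -
  have "finite F" using assms(1) finite_hypergrid finite_subset by blast
  define column where "column i = restrict (\<lambda>f. f i) F" for i :: nat
  have "column ` {1..n} \<subseteq> F \<rightarrow>\<^sub>E {1..t}"
    using assms(1) unfolding column_def hypergrid_def by auto
  moreover have "finite (F \<rightarrow>\<^sub>E {1..t})" using \<open>finite F\<close> by (simp add: finite_PiE)
  moreover have "card (F \<rightarrow>\<^sub>E {1..t}) < card {1..n}"
    using assms(2) by (simp add: card_PiE[OF \<open>finite F\<close>])
  ultimately have "\<not> inj_on column {1..n}"
    using card_inj_on_le[of column "{1..n}" "F \<rightarrow>\<^sub>E {1..t}"] by linarith
  then obtain i j where "i \<in> {1..n}" "j \<in> {1..n}" "i \<noteq> j" "column i = column j"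
    unfolding inj_on_def by blast
  moreover have "f i = f j" if "f \<in> F" for f
    using that fun_cong[OF \<open>column i = column j\<close>, of f] unfolding column_def by simp
  ultimately show ?thesis using that by blast
qed

definition extend_by_copy :: "nat \<Rightarrow> nat \<Rightarrow> (nat \<Rightarrow> nat) \<Rightarrow> nat \<Rightarrow> nat" where
  "extend_by_copy n i f = f(Suc n := f i)"

text \<open>A point of [t]^(n+1) pushed down to [t]^n: the largest of its values at i, j, n+1 goes
  to coordinate i and the smallest to j. Against points with equal values at i and j it then
  compares exactly as the original point does against their extensions.\<close>
definition collapse :: "nat \<Rightarrow> nat \<Rightarrow> nat \<Rightarrow> (nat \<Rightarrow> nat) \<Rightarrow> nat \<Rightarrow> nat" where
  "collapse n i j g = g(i := max (g i) (max (g j) (g (Suc n))),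
                        j := min (g i) (min (g j) (g (Suc n))), Suc n := 0)"

lemma extend_by_copy_in_hypergrid:
  "f \<in> hypergrid t n \<Longrightarrow> i \<in> {1..n} \<Longrightarrow> extend_by_copy n i f \<in> hypergrid t (Suc n)"
  unfolding hypergrid_def extend_by_copy_def by auto

lemma extend_by_copy_inj_on: "inj_on (extend_by_copy n i) (hypergrid t n)"
  by (rule inj_on_inverseI[where g = "\<lambda>f. f(Suc n := 0)"])
    (auto simp: extend_by_copy_def hypergrid_Suc_zero)

lemma grid_le_extend_by_copy:
  "i \<in> {1..n} \<Longrightarrow>
    grid_le (Suc n) (extend_by_copy n i f) (extend_by_copy n i g) = grid_le n f g"
  unfolding grid_le_Suc extend_by_copy_def grid_le_upd_Suc by (auto simp: grid_le_def)

lemma collapse_in_hypergrid: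
  assumes g: "g \<in> hypergrid t (Suc n)" and ij: "i \<in> {1..n}" "j \<in> {1..n}"
  shows "collapse n i j g \<in> hypergrid t n"
proof -
  have "g l \<in> {1..t}" if "l \<in> {1..Suc n}" for l
    using g that unfolding hypergrid_def by blast
  then have "g i \<in> {1..t}" "g j \<in> {1..t}" "g (Suc n) \<in> {1..t}"
    and inside: "\<forall>l\<in>{1..n}. g l \<in> {1..t}"
    using ij by auto
  then have "max (g i) (max (g j) (g (Suc n))) \<in> {1..t}"
    and "min (g i) (min (g j) (g (Suc n))) \<in> {1..t}"
    by auto
  then have "collapse n i j g l \<in> {1..t}" if "l \<in> {1..n}" for l
    using inside that unfolding collapse_def by simp
  moreover have "collapse n i j g l = 0" if "l \<notin> {1..n}" for l
    using g ij that unfolding hypergrid_def collapse_def by auto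
  ultimately show ?thesis unfolding hypergrid_def by blast
qed

lemma grid_le_split_at:
  assumes "i \<in> {1..n}" "j \<in> {1..n}" "i \<noteq> j"
  shows "grid_le n f g \<longleftrightarrow> (\<forall>l\<in>{1..n} - {i, j}. f l \<le> g l) \<and> f i \<le> g i \<and> f j \<le> g j"
  using assms unfolding grid_le_def by blast

lemma collapse_le_iff:
  assumes ij: "i \<in> {1..n}" "j \<in> {1..n}" "i \<noteq> j" and "f i = f j"
  shows "grid_le n (collapse n i j g) f \<longleftrightarrow> grid_le (Suc n) g (extend_by_copy n i f)"
proof -
  have "i \<noteq> Suc n" "j \<noteq> Suc n" using ij by auto
  then show ?thesis
    using assms unfolding grid_le_Suc grid_le_split_at[OF ij] collapse_def extend_by_copy_def
    by (auto simp: grid_le_def)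
qed

lemma le_collapse_iff:
  assumes ij: "i \<in> {1..n}" "j \<in> {1..n}" "i \<noteq> j" and "f i = f j"
  shows "grid_le n f (collapse n i j g) \<longleftrightarrow> grid_le (Suc n) (extend_by_copy n i f) g"
proof -
  have "i \<noteq> Suc n" "j \<noteq> Suc n" using ij by auto
  then show ?thesis
    using assms unfolding grid_le_Suc grid_le_split_at[OF ij] collapse_def extend_by_copy_def
    by (auto simp: grid_le_def)
qed

lemma extend_by_copy_collapse:
  assumes "i \<in> {1..n}" "j \<in> {1..n}" "i \<noteq> j" and "collapse n i j g i = collapse n i j g j"
  shows "extend_by_copy n i (collapse n i j g) = g"
  using assms unfolding collapse_def extend_by_copy_def by (auto simp: fun_eq_iff)

lemma induced_free_extend_by_copy:
  assumes "F \<subseteq> hypergrid t n" "induced_free P n F" and "i \<in> {1..n}"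
  shows "induced_free P (Suc n) (extend_by_copy n i ` F)"
proof -
  let ?G = "extend_by_copy n i ` F" and ?restrict = "\<lambda>f::nat \<Rightarrow> nat. f(Suc n := 0)"
  have restrict_extend: "?restrict (extend_by_copy n i f) = f" if "f \<in> F" for f
    using that assms(1) hypergrid_Suc_zero by (fastforce simp: extend_by_copy_def)
  then have "?restrict ` ?G = F" by (simp add: image_image)
  moreover have "inj_on ?restrict ?G"
    by (rule inj_on_inverseI[where g = "extend_by_copy n i"]) (auto simp: restrict_extend)
  moreover have "grid_le n (?restrict f) (?restrict g) = grid_le (Suc n) f g"
    if "f \<in> ?G" "g \<in> ?G" for f g
    using that restrict_extend grid_le_extend_by_copy[OF assms(3)] by auto
  ultimately have "contains_induced P (Suc n) ?G \<Longrightarrow> contains_induced P n F"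
    using contains_induced_image[of P "Suc n" ?G ?restrict n] by metis
  then show ?thesis using assms(2) unfolding induced_free_def by blast
qed

lemma contains_induced_insert_extend_by_copy:
  assumes sat: "induced_saturated P t n F"
    and ij: "i \<in> {1..n}" "j \<in> {1..n}" "i \<noteq> j" and twins: "\<forall>f\<in>F. f i = f j"
    and g: "g \<in> hypergrid t (Suc n) - extend_by_copy n i ` F"
  shows "contains_induced P (Suc n) (insert g (extend_by_copy n i ` F))"
proof -
  define h where "h = collapse n i j g"
  define e where "e f = (if f = h then g else extend_by_copy n i f)" for f
  have F: "F \<subseteq> hypergrid t n" using sat unfolding induced_saturated_def by blast
  have "h \<notin> F"
  proof
    assume "h \<in> F"
    then have "extend_by_copy n i h = g"
      using twins extend_by_copy_collapse[OF ij] unfolding h_def by blast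
    then show False using g \<open>h \<in> F\<close> by blast
  qed
  moreover have "h \<in> hypergrid t n"
    using collapse_in_hypergrid g ij(1,2) unfolding h_def by blast
  ultimately have "contains_induced P n (insert h F)"
    using sat unfolding induced_saturated_def by blast
  moreover have "e ` insert h F = insert g (extend_by_copy n i ` F)"
    using \<open>h \<notin> F\<close> unfolding e_def by auto
  moreover have "inj_on e (insert h F)"
  proof -
    have "inj_on (extend_by_copy n i) F"
      using inj_on_subset[OF extend_by_copy_inj_on F] .
    moreover have "g \<notin> extend_by_copy n i ` F" using g by blast
    ultimately show ?thesis
      using \<open>h \<notin> F\<close> unfolding e_def inj_on_def by (metis image_eqI insert_iff)
  qed
  moreover have "grid_le (Suc n) (e f) (e f') = grid_le n f f'"
    if "f \<in> insert h F" "f' \<in> insert h F" for f f'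
  proof (cases "f = h"; cases "f' = h")
    assume "f \<noteq> h" "f' \<noteq> h"
    then show ?thesis using grid_le_extend_by_copy[OF ij(1)] unfolding e_def by simp
  next
    assume "f = h" "f' \<noteq> h"
    then have "f' i = f' j" using that(2) twins by blast
    then show ?thesis using \<open>f = h\<close> \<open>f' \<noteq> h\<close> collapse_le_iff[OF ij]
      unfolding e_def h_def by simp
  next
    assume "f \<noteq> h" "f' = h"
    then have "f i = f j" using that(1) twins by blast
    then show ?thesis using \<open>f \<noteq> h\<close> \<open>f' = h\<close> le_collapse_iff[OF ij]
      unfolding e_def h_def by simp
  qed (simp add: e_def grid_le_def)
  ultimately show ?thesis using contains_induced_image by metis
qed

lemma induced_saturated_extend_by_copy:
  assumes sat: "induced_saturated P t n F"
    and ij: "i \<in> {1..n}" "j \<in> {1..n}" "i \<noteq> j" and twins: "\<forall>f\<in>F. f i = f j"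
  shows "induced_saturated P t (Suc n) (extend_by_copy n i ` F)"
proof -
  have F: "F \<subseteq> hypergrid t n" and "induced_free P n F"
    using sat unfolding induced_saturated_def by auto
  then have "extend_by_copy n i ` F \<subseteq> hypergrid t (Suc n)"
    and "induced_free P (Suc n) (extend_by_copy n i ` F)"
    using extend_by_copy_in_hypergrid[OF _ ij(1)] induced_free_extend_by_copy[OF _ _ ij(1)]
    by blast+
  then show ?thesis
    using contains_induced_insert_extend_by_copy[OF sat ij twins]
    unfolding induced_saturated_def by blast
qed

lemma sat_star_bounded_from_twins:
  assumes "induced_saturated P t n0 F"
    and ij: "i \<in> {1..n0}" "j \<in> {1..n0}" "i \<noteq> j" and "\<forall>f\<in>F. f i = f j"
  shows "\<forall>n\<ge>n0. sat_star P t n \<le> card F"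
proof -
  have "\<exists>G. induced_saturated P t (n0 + k) G \<and> card G = card F \<and> (\<forall>f\<in>G. f i = f j)" for k
  proof (induction k)
    case 0
    then show ?case using assms by auto
  next
    case (Suc k)
    then obtain G where G: "induced_saturated P t (n0 + k) G" "card G = card F"
      and twins: "\<forall>f\<in>G. f i = f j" by blast
    have "i \<in> {1..n0 + k}" "j \<in> {1..n0 + k}" using ij by auto
    moreover have "card (extend_by_copy (n0 + k) i ` G) = card G"
      using G(1) inj_on_subset[OF extend_by_copy_inj_on] card_image
      unfolding induced_saturated_def by blast
    ultimately show ?case
      using induced_saturated_extend_by_copy[OF G(1) _ _ ij(3) twins] G(2) twins
      by (auto simp: extend_by_copy_def)
  qed
  then show ?thesis using sat_star_le_card by (metis le_Suc_ex)
qed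

theorem mainTheorem7:
  fixes t :: nat
  assumes "t \<ge> 2"
  shows "(\<exists>C N. \<forall>n\<ge>N. embeds_in_grid TYPE('p::{order,finite}) t n \<longrightarrow>
                 sat_star TYPE('p) t n \<le> C)
       \<or> (\<forall>n\<ge>1. embeds_in_grid TYPE('p) t n \<longrightarrow>
                 real (sat_star TYPE('p) t n) \<ge> log (real t) (real n))"
proof (rule disjCI)
  assume "\<not> (\<forall>n\<ge>1. embeds_in_grid TYPE('p) t n \<longrightarrow>
                 real (sat_star TYPE('p) t n) \<ge> log (real t) (real n))"
  then obtain n0 where "n0 \<ge> 1" and small: "real (sat_star TYPE('p) t n0) < log (real t) (real n0)"
    by force
  obtain F where F: "induced_saturated TYPE('p) t n0 F" "card F = sat_star TYPE('p) t n0"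
    using sat_star_attained by blast
  have "real t ^ card F < real n0"
    using small F(2) assms \<open>n0 \<ge> 1\<close> by (simp add: less_log_iff powr_realpow)
  then have "t ^ card F < n0" by (metis of_nat_less_iff of_nat_power)
  moreover have "F \<subseteq> hypergrid t n0" using F(1) unfolding induced_saturated_def by blast
  ultimately obtain i j where "i \<in> {1..n0}" "j \<in> {1..n0}" "i \<noteq> j" "\<forall>f\<in>F. f i = f j"
    using twin_coordinates_exist by blast
  then have "\<forall>n\<ge>n0. sat_star TYPE('p) t n \<le> card F"
    using sat_star_bounded_from_twins F(1) by blast
  then show "\<exists>C N. \<forall>n\<ge>N. embeds_in_grid TYPE('p) t n \<longrightarrow> sat_star TYPE('p) t n \<le> C"
    by blast
qed

end
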